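(* Let $T$ be a non-abelian finite simple group, $k\geqslant 2$, $W=W(k,T)=T^k.(\mathrm{Out}(T)\times S_k)$ acting on $\Omega=[W:D]$, and let $t_1,\dots,t_k\in T$. Then $\{D,D(\varphi_{t_1},\dots,\varphi_{t_k})\}$ is a base for $W$ if and only if $t_1,\dots,t_k$ are distinct and $\mathrm{Hol}(T,\{t_1,\dots,t_k\})=1$.
   Context: $W(k,T)=\{(\alpha_1,\dots,\alpha_k)\pi\in\mathrm{Aut}(T)\wr S_k:\alpha_1\mathrm{Inn}(T)=\alpha_i\mathrm{Inn}(T)\ \forall i\}$, $D=\{(\alpha,\dots,\alpha)\pi:\alpha\in\mathrm{Aut}(T),\pi\in S_k\}$, $\Omega$ the right cosets of $D$ in $W$ with action by right multiplication. $\varphi_t$ is the inner automorphism $x\mapsto t^{-1}xt$. A base is a subset of $\Omega$ with trivial pointwise stabiliser. $\mathrm{Hol}(T)=T{:}\mathrm{Aut}(T)$ acts on $T$ by $t^{g\alpha}=(g^{-1}t)^\alpha$, and $\mathrm{Hol}(T,S)$ is the setwise stabiliser of $S\subseteq T$. *)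

theory Defs
  imports "HOL-Algebra.Algebra" "HOL-Combinatorics.Permutations"
begin

(* Aut(T) as a group; elements are automorphisms restricted to carrier T.
   Composition follows the paper's right-action convention:
   alpha * beta means "first alpha, then beta". *)
definition aut_group :: "('a, 'b) monoid_scheme \<Rightarrow> ('a \<Rightarrow> 'a) monoid" where
  "aut_group T = \<lparr> carrier = {\<alpha>. \<alpha> \<in> iso T T \<and> \<alpha> \<in> extensional (carrier T)},
                  monoid.mult = (\<lambda>\<alpha> \<beta>. restrict (\<beta> \<circ> \<alpha>) (carrier T)),
                  one = restrict id (carrier T) \<rparr>"

definition inner :: "('a, 'b) monoid_scheme \<Rightarrow> 'a \<Rightarrow> ('a \<Rightarrow> 'a)" where
  "inner T t = restrict (\<lambda>x. inv\<^bsub>T\<^esub> t \<otimes>\<^bsub>T\<^esub> x \<otimes>\<^bsub>T\<^esub> t) (carrier T)"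

definition Inn :: "('a, 'b) monoid_scheme \<Rightarrow> ('a \<Rightarrow> 'a) set" where
  "Inn T = inner T ` carrier T"

(* Aut(T) wr S_k: elements (alpha, pi) with alpha : {0..<k} \<rightarrow> Aut(T), pi a permutation
   of {0..<k} (acting on the right: i^pi = pi i).
   (alpha)pi * (beta)sigma = (alpha_i beta_{i pi})_i (pi sigma). *)
definition wreath :: "('a, 'b) monoid_scheme \<Rightarrow> nat \<Rightarrow>
    ((nat \<Rightarrow> ('a \<Rightarrow> 'a)) \<times> (nat \<Rightarrow> nat)) monoid" where
  "wreath T k = \<lparr> carrier = {(\<alpha>, \<pi>). \<alpha> \<in> {0..<k} \<rightarrow>\<^sub>E carrier (aut_group T) \<and> \<pi> permutes {0..<k}},
      monoid.mult = (\<lambda>(\<alpha>, \<pi>) (\<beta>, \<sigma>).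
                (\<lambda>i\<in>{0..<k}. \<alpha> i \<otimes>\<^bsub>aut_group T\<^esub> \<beta> (\<pi> i), \<sigma> \<circ> \<pi>)),
      one = (\<lambda>i\<in>{0..<k}. \<one>\<^bsub>aut_group T\<^esub>, id) \<rparr>"

(* W(k,T): alpha_1 Inn(T) = alpha_i Inn(T) for all i (index 0 plays the role of 1) *)
definition W_set :: "('a, 'b) monoid_scheme \<Rightarrow> nat \<Rightarrow> ((nat \<Rightarrow> ('a \<Rightarrow> 'a)) \<times> (nat \<Rightarrow> nat)) set" where
  "W_set T k = {(\<alpha>, \<pi>) \<in> carrier (wreath T k).
       \<forall>i\<in>{0..<k}. \<alpha> 0 <#\<^bsub>aut_group T\<^esub> Inn T = \<alpha> i <#\<^bsub>aut_group T\<^esub> Inn T}"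

definition W_group :: "('a, 'b) monoid_scheme \<Rightarrow> nat \<Rightarrow> ((nat \<Rightarrow> ('a \<Rightarrow> 'a)) \<times> (nat \<Rightarrow> nat)) monoid" where
  "W_group T k = (wreath T k) \<lparr> carrier := W_set T k \<rparr>"

definition D_set :: "('a, 'b) monoid_scheme \<Rightarrow> nat \<Rightarrow> ((nat \<Rightarrow> ('a \<Rightarrow> 'a)) \<times> (nat \<Rightarrow> nat)) set" where
  "D_set T k = {((\<lambda>i\<in>{0..<k}. a), \<pi>) | a \<pi>. a \<in> carrier (aut_group T) \<and> \<pi> permutes {0..<k}}"

(* Omega = right cosets of D in W, acted on by right multiplication Dx \<mapsto> Dxw.
   A base is a subset of Omega with trivial pointwise stabiliser. *)
definition is_base :: "('a, 'b) monoid_scheme \<Rightarrow> nat \<Rightarrow>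
    ((nat \<Rightarrow> ('a \<Rightarrow> 'a)) \<times> (nat \<Rightarrow> nat)) set set \<Rightarrow> bool" where
  "is_base T k B \<longleftrightarrow> B \<subseteq> rcosets\<^bsub>W_group T k\<^esub> (D_set T k) \<and>
     {w \<in> carrier (W_group T k). \<forall>\<omega>\<in>B. \<omega> #>\<^bsub>W_group T k\<^esub> w = \<omega>} = {\<one>\<^bsub>W_group T k\<^esub>}"

(* Hol(T) = T : Aut(T), elements (g, alpha) acting on T by t^{g alpha} = (g^{-1} t)^alpha;
   Hol(T,S) is the setwise stabiliser of S. *)
definition hol_stab :: "('a, 'b) monoid_scheme \<Rightarrow> 'a set \<Rightarrow> ('a \<times> ('a \<Rightarrow> 'a)) set" where
  "hol_stab T S = {(g, \<alpha>) \<in> carrier T \<times> carrier (aut_group T).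
       (\<lambda>s. \<alpha> (inv\<^bsub>T\<^esub> g \<otimes>\<^bsub>T\<^esub> s)) ` S = S}"

end

theory Submission
  imports Defs
begin

text \<open>
  Write \<open>x = (\<phi>(t_1), ..., \<phi>(t_k))\<close>. The pointwise stabiliser of \<open>D\<close> and \<open>Dx\<close> is
  \<open>D \<inter> x\<^sup>-\<^sup>1Dx\<close>: the diagonal elements \<open>(\<alpha>, ..., \<alpha>)\<pi>\<close> with
  \<open>\<phi>(t_i) \<alpha> = \<beta> \<phi>(t_(i\<pi>))\<close> for a single automorphism \<open>\<beta>\<close> and all \<open>i\<close>.
  Since \<open>\<phi>(s) \<alpha> = \<alpha> \<phi>(s\<^sup>\<alpha>)\<close>, this says that \<open>\<phi>(e_i)\<close> does not depend on \<open>i\<close>, where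
  \<open>e_i = t_i\<^sup>\<alpha> t_(i\<pi>)\<^sup>-\<^sup>1\<close>. A non-abelian simple group has trivial centre, so \<open>\<phi>\<close> is
  injective and \<open>e_i = c\<^sup>-\<^sup>1\<close> is constant: \<open>t_(i\<pi>) = c t_i\<^sup>\<alpha>\<close>, i.e. some element of
  \<open>Hol(T)\<close> with automorphism part \<open>\<alpha>\<close> maps the tuple \<open>(t_i)\<close> to \<open>(t_(i\<pi>))\<close>.
  All such \<open>(\<alpha>, \<pi>)\<close> are trivial iff the \<open>t_i\<close> are distinct (otherwise a transposition
  qualifies) and \<open>Hol(T, {t_1, ..., t_k}) = 1\<close>, because the elements of \<open>Hol(T, {t_1, ..., t_k})\<close>
  are exactly those inducing a permutation of the distinct \<open>t_i\<close>.
\<close>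

lemma permutes_of_image_invariant:
  assumes t: "inj_on t A" and f: "inj_on f (t ` A)" "f ` t ` A = t ` A"
  shows "\<exists>\<pi>. \<pi> permutes A \<and> (\<forall>i\<in>A. t (\<pi> i) = f (t i))"
proof -
  define \<pi> where "\<pi> i = (if i \<in> A then inv_into A t (f (t i)) else i)" for i
  have bij_t: "bij_betw t A (t ` A)" using t by (rule inj_on_imp_bij_betw)
  have "bij_betw f (t ` A) (t ` A)" using f by (simp add: bij_betw_def)
  then have "bij_betw (inv_into A t \<circ> (f \<circ> t)) A A"
    using bij_t bij_betw_inv_into[OF bij_t] by (blast intro: bij_betw_trans)
  then have "bij_betw \<pi> A A"
    by (rule bij_betw_cong[THEN iffD1, rotated]) (simp add: \<pi>_def)
  then have "\<pi> permutes A"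
    by (rule bij_imp_permutes) (simp add: \<pi>_def)
  moreover have "t (\<pi> i) = f (t i)" if "i \<in> A" for i
    using that f(2) by (auto simp: \<pi>_def intro!: f_inv_into_f)
  ultimately show ?thesis by blast
qed

lemma restrict_eq_restrict_iff: "(\<lambda>x\<in>A. f x) = (\<lambda>x\<in>A. g x) \<longleftrightarrow> (\<forall>x\<in>A. f x = g x)"
  by (metis restrict_apply' restrict_ext)

context group
begin

lemma aut_group_carrier_iff:
  "\<alpha> \<in> carrier (aut_group G) \<longleftrightarrow> \<alpha> \<in> iso G G \<and> \<alpha> \<in> extensional (carrier G)"
  by (simp add: aut_group_def)

lemma aut_group_mult: "\<alpha> \<otimes>\<^bsub>aut_group G\<^esub> \<beta> = restrict (\<beta> \<circ> \<alpha>) (carrier G)"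
  by (simp add: aut_group_def)

lemma aut_group_one: "\<one>\<^bsub>aut_group G\<^esub> = restrict id (carrier G)"
  by (simp add: aut_group_def)

lemma aut_group_hom: "\<alpha> \<in> carrier (aut_group G) \<Longrightarrow> group_hom G G \<alpha>"
  unfolding group_hom_def group_hom_axioms_def aut_group_carrier_iff
  using is_group iso_imp_homomorphism by blast

lemma aut_bij_betw: "\<alpha> \<in> carrier (aut_group G) \<Longrightarrow> bij_betw \<alpha> (carrier G) (carrier G)"
  by (simp add: aut_group_carrier_iff iso_def)

lemma aut_closed [simp]: "\<alpha> \<in> carrier (aut_group G) \<Longrightarrow> x \<in> carrier G \<Longrightarrow> \<alpha> x \<in> carrier G"
  using aut_bij_betw bij_betwE by blast

lemma aut_mult_apply [simp]:
  "\<alpha> \<in> carrier (aut_group G) \<Longrightarrow> x \<in> carrier G \<Longrightarrow> y \<in> carrier G \<Longrightarrow> \<alpha> (x \<otimes> y) = \<alpha> x \<otimes> \<alpha> y"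
  by (rule group_hom.hom_mult[OF aut_group_hom])

lemma aut_inv_apply [simp]:
  "\<alpha> \<in> carrier (aut_group G) \<Longrightarrow> x \<in> carrier G \<Longrightarrow> \<alpha> (inv x) = inv (\<alpha> x)"
  by (rule group_hom.hom_inv[OF aut_group_hom])

lemma aut_eqI:
  assumes "\<alpha> \<in> carrier (aut_group G)" "\<beta> \<in> carrier (aut_group G)"
    and "\<And>x. x \<in> carrier G \<Longrightarrow> \<alpha> x = \<beta> x"
  shows "\<alpha> = \<beta>"
  using assms by (meson aut_group_carrier_iff extensionalityI)

lemma aut_group_mult_closed:
  assumes "\<alpha> \<in> carrier (aut_group G)" "\<beta> \<in> carrier (aut_group G)"
  shows "\<alpha> \<otimes>\<^bsub>aut_group G\<^esub> \<beta> \<in> carrier (aut_group G)"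
proof -
  have "\<beta> \<circ> \<alpha> \<in> iso G G"
    using assms by (intro iso_set_trans[where H = G]) (simp_all add: aut_group_carrier_iff)
  then have "restrict (\<beta> \<circ> \<alpha>) (carrier G) \<in> iso G G" by (rule iso_eq) simp
  then show ?thesis by (simp add: aut_group_mult aut_group_carrier_iff)
qed

lemma aut_group_one_closed: "\<one>\<^bsub>aut_group G\<^esub> \<in> carrier (aut_group G)"
  using iso_eq[OF id_iso] by (simp add: aut_group_one aut_group_carrier_iff)

lemma group_aut_group: "group (aut_group G)"
proof (rule groupI)
  fix \<alpha> assume \<alpha>: "\<alpha> \<in> carrier (aut_group G)"
  then show "\<one>\<^bsub>aut_group G\<^esub> \<otimes>\<^bsub>aut_group G\<^esub> \<alpha> = \<alpha>"
    by (intro aut_eqI)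
      (simp_all add: aut_group_mult_closed aut_group_one_closed, simp add: aut_group_mult aut_group_one)
  define \<beta> where "\<beta> = restrict (inv_into (carrier G) \<alpha>) (carrier G)"
  have "inv_into (carrier G) \<alpha> \<in> iso G G"
    using \<alpha> by (intro iso_set_sym) (simp add: aut_group_carrier_iff)
  then have "\<beta> \<in> carrier (aut_group G)"
    unfolding \<beta>_def aut_group_carrier_iff by (simp add: iso_eq)
  moreover have "\<beta> \<otimes>\<^bsub>aut_group G\<^esub> \<alpha> = \<one>\<^bsub>aut_group G\<^esub>"
    using aut_bij_betw[OF \<alpha>]
    by (auto simp: aut_group_mult aut_group_one \<beta>_def fun_eq_iff bij_betw_inv_into_right)
  ultimately show "\<exists>\<beta>\<in>carrier (aut_group G). \<beta> \<otimes>\<^bsub>aut_group G\<^esub> \<alpha> = \<one>\<^bsub>aut_group G\<^esub>"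
    by blast
qed (simp_all add: aut_group_mult_closed aut_group_one_closed, auto simp: aut_group_mult fun_eq_iff)

lemma mult_inv_cancel_left [simp]: "x \<in> carrier G \<Longrightarrow> y \<in> carrier G \<Longrightarrow> x \<otimes> (inv x \<otimes> y) = y"
  by (simp flip: m_assoc)

lemma inv_mult_cancel_left [simp]: "x \<in> carrier G \<Longrightarrow> y \<in> carrier G \<Longrightarrow> inv x \<otimes> (x \<otimes> y) = y"
  by (simp flip: m_assoc)

lemma inner_apply [simp]: "x \<in> carrier G \<Longrightarrow> inner G s x = inv s \<otimes> x \<otimes> s"
  by (simp add: inner_def)

lemma inner_in_aut_group:
  assumes s: "s \<in> carrier G"
  shows "inner G s \<in> carrier (aut_group G)"
proof -
  have hom: "inner G u \<in> hom G G" if "u \<in> carrier G" for u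
    using that by (auto simp: hom_def m_assoc)
  have "group_isomorphisms G G (inner G s) (inner G (inv s))"
    using s hom by (auto simp: group_isomorphisms_def m_assoc)
  then have "inner G s \<in> iso G G" by (rule group_isomorphisms_imp_iso)
  then show ?thesis by (simp add: aut_group_carrier_iff inner_def)
qed

lemma inner_mult:
  "s \<in> carrier G \<Longrightarrow> u \<in> carrier G \<Longrightarrow>
    inner G s \<otimes>\<^bsub>aut_group G\<^esub> inner G u = inner G (s \<otimes> u)"
  by (auto simp: aut_group_mult inner_def fun_eq_iff inv_mult_group m_assoc)

lemma group_hom_inner: "group_hom G (aut_group G) (inner G)"
  using group_aut_group
  by (auto simp: group_hom_def group_hom_axioms_def hom_def inner_in_aut_group inner_mult is_group)

lemma inner_aut_commute:
  assumes "\<alpha> \<in> carrier (aut_group G)" "s \<in> carrier G"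
  shows "inner G s \<otimes>\<^bsub>aut_group G\<^esub> \<alpha> = \<alpha> \<otimes>\<^bsub>aut_group G\<^esub> inner G (\<alpha> s)"
  using assms by (auto simp: aut_group_mult fun_eq_iff)

lemma inner_conj_eq_iff:
  assumes \<alpha>: "\<alpha> \<in> carrier (aut_group G)" and \<beta>: "\<beta> \<in> carrier (aut_group G)"
    and s: "s \<in> carrier G" and u: "u \<in> carrier G"
  shows "inner G s \<otimes>\<^bsub>aut_group G\<^esub> \<alpha> = \<beta> \<otimes>\<^bsub>aut_group G\<^esub> inner G u
    \<longleftrightarrow> \<beta> = \<alpha> \<otimes>\<^bsub>aut_group G\<^esub> inner G (\<alpha> s \<otimes> inv u)"
proof -
  interpret A: group "aut_group G" by (rule group_aut_group)
  have "\<alpha> \<otimes>\<^bsub>aut_group G\<^esub> inner G (\<alpha> s \<otimes> inv u) \<otimes>\<^bsub>aut_group G\<^esub> inner G u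
      = \<alpha> \<otimes>\<^bsub>aut_group G\<^esub> inner G (\<alpha> s \<otimes> inv u \<otimes> u)"
    using \<alpha> s u by (simp add: A.m_assoc inner_in_aut_group inner_mult)
  also have "\<dots> = inner G s \<otimes>\<^bsub>aut_group G\<^esub> \<alpha>"
    using \<alpha> s u by (simp add: m_assoc inner_aut_commute)
  finally have "inner G s \<otimes>\<^bsub>aut_group G\<^esub> \<alpha>
      = \<alpha> \<otimes>\<^bsub>aut_group G\<^esub> inner G (\<alpha> s \<otimes> inv u) \<otimes>\<^bsub>aut_group G\<^esub> inner G u" ..
  then show ?thesis
    using \<alpha> \<beta> s u by (simp add: inner_in_aut_group eq_commute)
qed

lemma Inn_l_coset: "s \<in> carrier G \<Longrightarrow> inner G s <#\<^bsub>aut_group G\<^esub> Inn G = Inn G"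
  using group_hom_inner group_aut_group inner_in_aut_group
  by (intro group.coset_join3) (auto simp: Inn_def group_hom.img_is_subgroup)

end

lemma (in simple_group) inj_on_inner:
  assumes "\<not> comm_group G"
  shows "inj_on (inner G) (carrier G)"
proof -
  let ?Z = "kernel G (aut_group G) (inner G)"
  have "?Z \<noteq> carrier G"
  proof
    assume Z: "?Z = carrier G"
    have "x \<otimes> y = y \<otimes> x" if x: "x \<in> carrier G" and y: "y \<in> carrier G" for x y
    proof -
      have "inner G x = \<one>\<^bsub>aut_group G\<^esub>" using x Z by (auto simp: kernel_def)
      then have "inv x \<otimes> y \<otimes> x = y" using x y by (metis aut_group_one inner_apply restrict_apply' id_apply)
      then show ?thesis using x y by (metis inv_mult_cancel_left m_assoc m_closed inv_closed)
    qed
    then have "comm_group G" by (rule group_comm_groupI)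
    with assms show False ..
  qed
  then show ?thesis
    using no_real_normal_subgroup[OF group_hom.normal_kernel[OF group_hom_inner]]
      group_hom.inj_iff_trivial_ker[OF group_hom_inner] by blast
qed

context group
begin

lemma wreath_carrier_iff:
  "(\<alpha>, \<pi>) \<in> carrier (wreath G k) \<longleftrightarrow>
    \<alpha> \<in> {0..<k} \<rightarrow>\<^sub>E carrier (aut_group G) \<and> \<pi> permutes {0..<k}"
  by (simp add: wreath_def)

lemma wreath_mult:
  "(\<alpha>, \<pi>) \<otimes>\<^bsub>wreath G k\<^esub> (\<beta>, \<sigma>) =
    (\<lambda>i\<in>{0..<k}. \<alpha> i \<otimes>\<^bsub>aut_group G\<^esub> \<beta> (\<pi> i), \<sigma> \<circ> \<pi>)"
  by (simp add: wreath_def)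

lemma wreath_one: "\<one>\<^bsub>wreath G k\<^esub> = (\<lambda>i\<in>{0..<k}. \<one>\<^bsub>aut_group G\<^esub>, id)"
  by (simp add: wreath_def)

lemma group_wreath: "group (wreath G k)"
proof -
  interpret A: group "aut_group G" by (rule group_aut_group)
  have perm_lt: "\<pi> permutes {0..<k} \<Longrightarrow> i < k \<Longrightarrow> \<pi> i < k" for \<pi> i
    using permutes_in_image by fastforce
  show ?thesis
  proof (rule groupI; (simp only: split_paired_all)?)
    fix \<alpha> \<pi> \<beta> \<sigma>
    assume "(\<alpha>, \<pi>) \<in> carrier (wreath G k)" "(\<beta>, \<sigma>) \<in> carrier (wreath G k)"
    then show "(\<alpha>, \<pi>) \<otimes>\<^bsub>wreath G k\<^esub> (\<beta>, \<sigma>) \<in> carrier (wreath G k)"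
      by (auto simp: wreath_carrier_iff wreath_mult perm_lt permutes_compose PiE_iff)
  next
    show "\<one>\<^bsub>wreath G k\<^esub> \<in> carrier (wreath G k)"
      by (simp add: wreath_one wreath_carrier_iff permutes_id)
  next
    fix \<alpha> \<pi> \<beta> \<sigma> \<gamma> \<rho>
    assume "(\<alpha>, \<pi>) \<in> carrier (wreath G k)" "(\<beta>, \<sigma>) \<in> carrier (wreath G k)"
      "(\<gamma>, \<rho>) \<in> carrier (wreath G k)"
    then show "(\<alpha>, \<pi>) \<otimes>\<^bsub>wreath G k\<^esub> (\<beta>, \<sigma>) \<otimes>\<^bsub>wreath G k\<^esub> (\<gamma>, \<rho>) =
        (\<alpha>, \<pi>) \<otimes>\<^bsub>wreath G k\<^esub> ((\<beta>, \<sigma>) \<otimes>\<^bsub>wreath G k\<^esub> (\<gamma>, \<rho>))"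
      by (auto simp: wreath_carrier_iff wreath_mult perm_lt A.m_assoc PiE_iff fun_eq_iff)
  next
    fix \<alpha> \<pi>
    assume "(\<alpha>, \<pi>) \<in> carrier (wreath G k)"
    then show "\<one>\<^bsub>wreath G k\<^esub> \<otimes>\<^bsub>wreath G k\<^esub> (\<alpha>, \<pi>) = (\<alpha>, \<pi>)"
      by (auto simp: wreath_carrier_iff wreath_mult wreath_one fun_eq_iff PiE_iff extensional_def)
  next
    fix \<alpha> \<pi>
    assume \<alpha>\<pi>: "(\<alpha>, \<pi>) \<in> carrier (wreath G k)"
    then have \<pi>: "\<pi> permutes {0..<k}" by (simp add: wreath_carrier_iff)
    let ?\<beta> = "(\<lambda>i\<in>{0..<k}. inv\<^bsub>aut_group G\<^esub> \<alpha> (Hilbert_Choice.inv \<pi> i), Hilbert_Choice.inv \<pi>)"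
    have "?\<beta> \<in> carrier (wreath G k)"
      using \<alpha>\<pi> perm_lt[OF permutes_inv[OF \<pi>]] by (auto simp: wreath_carrier_iff permutes_inv[OF \<pi>])
    moreover have "?\<beta> \<otimes>\<^bsub>wreath G k\<^esub> (\<alpha>, \<pi>) = \<one>\<^bsub>wreath G k\<^esub>"
      using \<alpha>\<pi> perm_lt[OF permutes_inv[OF \<pi>]]
      by (auto simp: wreath_carrier_iff wreath_mult wreath_one fun_eq_iff PiE_iff
          permutes_inverses[OF \<pi>] permutes_inv_o[OF \<pi>])
    ultimately show "\<exists>\<beta>\<in>carrier (wreath G k). \<beta> \<otimes>\<^bsub>wreath G k\<^esub> (\<alpha>, \<pi>) = \<one>\<^bsub>wreath G k\<^esub>"
      by blast
  qed
qed

lemma wreath_mult_diag: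
  assumes "\<pi> permutes {0..<k}"
  shows "((\<lambda>i\<in>{0..<k}. \<alpha>), \<pi>) \<otimes>\<^bsub>wreath G k\<^esub> ((\<lambda>i\<in>{0..<k}. \<beta>), \<sigma>) =
    ((\<lambda>i\<in>{0..<k}. \<alpha> \<otimes>\<^bsub>aut_group G\<^esub> \<beta>), \<sigma> \<circ> \<pi>)"
  using permutes_in_image[OF assms] by (auto simp: wreath_mult fun_eq_iff)

lemma D_set_subgroup: "subgroup (D_set G k) (wreath G k)"
proof -
  interpret A: group "aut_group G" by (rule group_aut_group)
  interpret W: group "wreath G k" by (rule group_wreath)
  show ?thesis
  proof (rule W.subgroupI)
    show "D_set G k \<subseteq> carrier (wreath G k)"
      by (auto simp: D_set_def wreath_carrier_iff)
    show "D_set G k \<noteq> {}"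
      unfolding D_set_def using permutes_id A.one_closed by blast
  next
    fix w assume "w \<in> D_set G k"
    then obtain \<alpha> \<pi> where w: "w = ((\<lambda>i\<in>{0..<k}. \<alpha>), \<pi>)"
      and \<alpha>: "\<alpha> \<in> carrier (aut_group G)" and \<pi>: "\<pi> permutes {0..<k}"
      by (auto simp: D_set_def)
    let ?w' = "((\<lambda>i\<in>{0..<k}. inv\<^bsub>aut_group G\<^esub> \<alpha>), Hilbert_Choice.inv \<pi>)"
    have "inv\<^bsub>wreath G k\<^esub> w = ?w'"
      using \<alpha> \<pi> permutes_inv[OF \<pi>]
      by (intro W.inv_equality)
        (simp_all add: w wreath_mult_diag wreath_one wreath_carrier_iff permutes_inv_o)
    then show "inv\<^bsub>wreath G k\<^esub> w \<in> D_set G k"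
      using \<alpha> permutes_inv[OF \<pi>] by (auto simp: D_set_def)
  next
    fix w v assume "w \<in> D_set G k" "v \<in> D_set G k"
    then show "w \<otimes>\<^bsub>wreath G k\<^esub> v \<in> D_set G k"
      unfolding D_set_def by (force simp: wreath_mult_diag permutes_compose)
  qed
qed

lemma D_set_subset_W_set: "D_set G k \<subseteq> W_set G k"
  by (auto simp: D_set_def W_set_def wreath_carrier_iff)

lemma inner_tuple_in_W_set:
  "(\<And>i. i < k \<Longrightarrow> t i \<in> carrier G) \<Longrightarrow> ((\<lambda>i\<in>{0..<k}. inner G (t i)), id) \<in> W_set G k"
  by (auto simp: W_set_def wreath_carrier_iff inner_in_aut_group Inn_l_coset)

lemma rcos_pair_stabiliser_iff:
  assumes H: "subgroup H G" and x: "x \<in> carrier G" and w: "w \<in> carrier G"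
  shows "H #> w = H \<and> (H #> x) #> w = H #> x \<longleftrightarrow> w \<in> H \<and> (\<exists>h\<in>H. x \<otimes> w = h \<otimes> x)"
proof -
  have HG: "H \<subseteq> carrier G" using H by (rule subgroup.subset)
  have "H #> w = H \<longleftrightarrow> w \<in> H"
    using H w coset_join1 coset_join2 by blast
  moreover have "(H #> x) #> w = H #> x \<longleftrightarrow> x \<otimes> w \<in> H #> x"
    unfolding coset_mult_assoc[OF HG x w]
    using repr_independence[OF _ x H] repr_independenceD[OF H m_closed[OF x w]] by metis
  moreover have "x \<otimes> w \<in> H #> x \<longleftrightarrow> (\<exists>h\<in>H. x \<otimes> w = h \<otimes> x)"
    by (auto simp: r_coset_def)
  ultimately show ?thesis by blast
qed

lemma is_base_pair_iff:
  assumes x: "x \<in> W_set G k"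
  shows "is_base G k {D_set G k, D_set G k #>\<^bsub>W_group G k\<^esub> x} \<longleftrightarrow>
    (\<forall>w\<in>D_set G k. (\<exists>d\<in>D_set G k. x \<otimes>\<^bsub>wreath G k\<^esub> w = d \<otimes>\<^bsub>wreath G k\<^esub> x)
       \<longrightarrow> w = \<one>\<^bsub>wreath G k\<^esub>)"
proof -
  interpret W: group "wreath G k" by (rule group_wreath)
  let ?D = "D_set G k"
  have D: "subgroup ?D (wreath G k)" by (rule D_set_subgroup)
  have DW: "?D \<subseteq> W_set G k" by (rule D_set_subset_W_set)
  have W: "W_set G k \<subseteq> carrier (wreath G k)" by (auto simp: W_set_def)
  have rcos: "H #>\<^bsub>W_group G k\<^esub> y = H #>\<^bsub>wreath G k\<^esub> y" for H y
    by (simp add: r_coset_def W_group_def)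
  have one_D: "\<one>\<^bsub>wreath G k\<^esub> \<in> ?D" using D by (rule subgroup.one_closed)
  have "?D = ?D #>\<^bsub>wreath G k\<^esub> \<one>\<^bsub>wreath G k\<^esub>"
    using W.coset_join2[OF W.one_closed D one_D] by simp
  then have "{?D, ?D #>\<^bsub>W_group G k\<^esub> x} \<subseteq> rcosets\<^bsub>W_group G k\<^esub> ?D"
    using x one_D DW unfolding RCOSETS_def rcos by (auto simp: W_group_def)
  moreover have "{w \<in> carrier (W_group G k). \<forall>\<omega>\<in>{?D, ?D #>\<^bsub>W_group G k\<^esub> x}. \<omega> #>\<^bsub>W_group G k\<^esub> w = \<omega>}
      = {w \<in> ?D. \<exists>d\<in>?D. x \<otimes>\<^bsub>wreath G k\<^esub> w = d \<otimes>\<^bsub>wreath G k\<^esub> x}" (is "?S = ?R")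
  proof (rule Set.set_eqI)
    fix w
    have "w \<in> W_set G k \<Longrightarrow>
        (?D #>\<^bsub>wreath G k\<^esub> w = ?D \<and> (?D #>\<^bsub>wreath G k\<^esub> x) #>\<^bsub>wreath G k\<^esub> w = ?D #>\<^bsub>wreath G k\<^esub> x)
        \<longleftrightarrow> w \<in> ?D \<and> (\<exists>d\<in>?D. x \<otimes>\<^bsub>wreath G k\<^esub> w = d \<otimes>\<^bsub>wreath G k\<^esub> x)"
      using W.rcos_pair_stabiliser_iff[OF D, of x w] x W by blast
    moreover have "carrier (W_group G k) = W_set G k" by (simp add: W_group_def)
    ultimately show "w \<in> ?S \<longleftrightarrow> w \<in> ?R" using DW unfolding rcos by blast
  qed
  moreover have "x \<otimes>\<^bsub>wreath G k\<^esub> \<one>\<^bsub>wreath G k\<^esub> = \<one>\<^bsub>wreath G k\<^esub> \<otimes>\<^bsub>wreath G k\<^esub> x"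
    using x W by auto
  moreover have "\<one>\<^bsub>W_group G k\<^esub> = \<one>\<^bsub>wreath G k\<^esub>" by (simp add: W_group_def)
  ultimately show ?thesis
    using one_D unfolding is_base_def by (simp only:) blast
qed

lemma inner_tuple_conj_iff:
  assumes \<pi>: "\<pi> permutes {0..<k}"
  shows "(\<exists>d\<in>D_set G k. ((\<lambda>i\<in>{0..<k}. inner G (t i)), id) \<otimes>\<^bsub>wreath G k\<^esub> ((\<lambda>i\<in>{0..<k}. \<alpha>), \<pi>)
                       = d \<otimes>\<^bsub>wreath G k\<^esub> ((\<lambda>i\<in>{0..<k}. inner G (t i)), id))
    \<longleftrightarrow> (\<exists>\<beta>\<in>carrier (aut_group G). \<forall>i\<in>{0..<k}.
          inner G (t i) \<otimes>\<^bsub>aut_group G\<^esub> \<alpha> = \<beta> \<otimes>\<^bsub>aut_group G\<^esub> inner G (t (\<pi> i)))"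
    (is "?lhs \<longleftrightarrow> ?rhs")
proof -
  have L: "((\<lambda>i\<in>{0..<k}. inner G (t i)), id) \<otimes>\<^bsub>wreath G k\<^esub> ((\<lambda>i\<in>{0..<k}. \<alpha>), \<pi>)
      = ((\<lambda>i\<in>{0..<k}. inner G (t i) \<otimes>\<^bsub>aut_group G\<^esub> \<alpha>), \<pi>)"
    by (auto simp: wreath_mult fun_eq_iff)
  have R: "((\<lambda>i\<in>{0..<k}. \<beta>), \<sigma>) \<otimes>\<^bsub>wreath G k\<^esub> ((\<lambda>i\<in>{0..<k}. inner G (t i)), id)
      = ((\<lambda>i\<in>{0..<k}. \<beta> \<otimes>\<^bsub>aut_group G\<^esub> inner G (t (\<sigma> i))), \<sigma>)"
    if "\<sigma> permutes {0..<k}" for \<beta> \<sigma>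
    using permutes_in_image[OF that] by (auto simp: wreath_mult fun_eq_iff)
  have "?lhs \<longleftrightarrow> (\<exists>\<beta>\<in>carrier (aut_group G).
      (\<lambda>i\<in>{0..<k}. inner G (t i) \<otimes>\<^bsub>aut_group G\<^esub> \<alpha>)
      = (\<lambda>i\<in>{0..<k}. \<beta> \<otimes>\<^bsub>aut_group G\<^esub> inner G (t (\<pi> i))))"
  proof
    assume ?lhs
    then show "\<exists>\<beta>\<in>carrier (aut_group G). (\<lambda>i\<in>{0..<k}. inner G (t i) \<otimes>\<^bsub>aut_group G\<^esub> \<alpha>)
      = (\<lambda>i\<in>{0..<k}. \<beta> \<otimes>\<^bsub>aut_group G\<^esub> inner G (t (\<pi> i)))"
      unfolding D_set_def L using R by auto
  next
    assume "\<exists>\<beta>\<in>carrier (aut_group G). (\<lambda>i\<in>{0..<k}. inner G (t i) \<otimes>\<^bsub>aut_group G\<^esub> \<alpha>)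
      = (\<lambda>i\<in>{0..<k}. \<beta> \<otimes>\<^bsub>aut_group G\<^esub> inner G (t (\<pi> i)))"
    then show ?lhs
      unfolding D_set_def L using R[OF \<pi>] \<pi> by fastforce
  qed
  also have "\<dots> \<longleftrightarrow> ?rhs"
    by (simp add: restrict_eq_restrict_iff)
  finally show ?thesis .
qed

end

definition hol_relabels ::
    "('a, 'b) monoid_scheme \<Rightarrow> 'i set \<Rightarrow> ('i \<Rightarrow> 'a) \<Rightarrow> ('a \<Rightarrow> 'a) \<Rightarrow> ('i \<Rightarrow> 'i) \<Rightarrow> bool" where
  "hol_relabels G A t \<alpha> \<pi> \<longleftrightarrow> (\<exists>g\<in>carrier G. \<forall>i\<in>A. t (\<pi> i) = \<alpha> (inv\<^bsub>G\<^esub> g \<otimes>\<^bsub>G\<^esub> t i))"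

definition hol_rigid :: "('a, 'b) monoid_scheme \<Rightarrow> 'i set \<Rightarrow> ('i \<Rightarrow> 'a) \<Rightarrow> bool" where
  "hol_rigid G A t \<longleftrightarrow> (\<forall>\<alpha>\<in>carrier (aut_group G). \<forall>\<pi>. \<pi> permutes A \<longrightarrow> hol_relabels G A t \<alpha> \<pi>
     \<longrightarrow> \<alpha> = \<one>\<^bsub>aut_group G\<^esub> \<and> \<pi> = id)"

context group
begin

lemma hol_relabels_iff:
  assumes \<alpha>: "\<alpha> \<in> carrier (aut_group G)" and t: "t ` A \<subseteq> carrier G"
  shows "hol_relabels G A t \<alpha> \<pi> \<longleftrightarrow> (\<exists>c\<in>carrier G. \<forall>i\<in>A. t (\<pi> i) = c \<otimes> \<alpha> (t i))"
proof
  assume "hol_relabels G A t \<alpha> \<pi>"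
  then obtain g where "g \<in> carrier G" "\<forall>i\<in>A. t (\<pi> i) = \<alpha> (inv g \<otimes> t i)"
    by (auto simp: hol_relabels_def)
  then show "\<exists>c\<in>carrier G. \<forall>i\<in>A. t (\<pi> i) = c \<otimes> \<alpha> (t i)"
    using \<alpha> t by (intro bexI[of _ "\<alpha> (inv g)"]) auto
next
  assume "\<exists>c\<in>carrier G. \<forall>i\<in>A. t (\<pi> i) = c \<otimes> \<alpha> (t i)"
  then obtain c where c: "c \<in> carrier G" "\<forall>i\<in>A. t (\<pi> i) = c \<otimes> \<alpha> (t i)" by blast
  then obtain h where h: "h \<in> carrier G" "\<alpha> h = c"
    using aut_bij_betw[OF \<alpha>] by (metis bij_betw_imp_surj_on imageE)
  then show "hol_relabels G A t \<alpha> \<pi>"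
    using \<alpha> t c unfolding hol_relabels_def by (intro bexI[of _ "inv h"]) auto
qed

lemma exists_aut_conj_iff_hol_relabels:
  assumes inj: "inj_on (inner G) (carrier G)" and "A \<noteq> {}"
    and t: "t ` A \<subseteq> carrier G" and \<pi>: "\<pi> ` A \<subseteq> A" and \<alpha>: "\<alpha> \<in> carrier (aut_group G)"
  shows "(\<exists>\<beta>\<in>carrier (aut_group G). \<forall>i\<in>A.
            inner G (t i) \<otimes>\<^bsub>aut_group G\<^esub> \<alpha> = \<beta> \<otimes>\<^bsub>aut_group G\<^esub> inner G (t (\<pi> i)))
    \<longleftrightarrow> hol_relabels G A t \<alpha> \<pi>"
proof -
  interpret A: group "aut_group G" by (rule group_aut_group)
  define e where "e i = \<alpha> (t i) \<otimes> inv (t (\<pi> i))" for i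
  have tA: "i \<in> A \<Longrightarrow> t i \<in> carrier G" "i \<in> A \<Longrightarrow> t (\<pi> i) \<in> carrier G" for i
    using t \<pi> by auto
  have e: "i \<in> A \<Longrightarrow> e i \<in> carrier G" for i
    using \<alpha> tA by (simp add: e_def)
  obtain i\<^sub>0 where i\<^sub>0: "i\<^sub>0 \<in> A" using \<open>A \<noteq> {}\<close> by blast
  have "(\<exists>\<beta>\<in>carrier (aut_group G). \<forall>i\<in>A.
            inner G (t i) \<otimes>\<^bsub>aut_group G\<^esub> \<alpha> = \<beta> \<otimes>\<^bsub>aut_group G\<^esub> inner G (t (\<pi> i)))
    \<longleftrightarrow> (\<exists>\<beta>\<in>carrier (aut_group G). \<forall>i\<in>A. \<beta> = \<alpha> \<otimes>\<^bsub>aut_group G\<^esub> inner G (e i))"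
    using \<alpha> tA by (simp add: inner_conj_eq_iff e_def)
  also have "\<dots> \<longleftrightarrow> (\<exists>c\<in>carrier G. \<forall>i\<in>A. e i = c)"
  proof
    assume "\<exists>\<beta>\<in>carrier (aut_group G). \<forall>i\<in>A. \<beta> = \<alpha> \<otimes>\<^bsub>aut_group G\<^esub> inner G (e i)"
    then have "inner G (e i) = inner G (e i\<^sub>0)" if "i \<in> A" for i
      using that i\<^sub>0 \<alpha> e by (metis A.l_cancel inner_in_aut_group)
    then show "\<exists>c\<in>carrier G. \<forall>i\<in>A. e i = c"
      using inj e i\<^sub>0 by (metis inj_onD)
  next
    assume "\<exists>c\<in>carrier G. \<forall>i\<in>A. e i = c"
    then obtain c where "c \<in> carrier G" "\<forall>i\<in>A. e i = c" by blast
    then show "\<exists>\<beta>\<in>carrier (aut_group G). \<forall>i\<in>A. \<beta> = \<alpha> \<otimes>\<^bsub>aut_group G\<^esub> inner G (e i)"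
      using \<alpha> inner_in_aut_group by (intro bexI[of _ "\<alpha> \<otimes>\<^bsub>aut_group G\<^esub> inner G c"]) auto
  qed
  also have "\<dots> \<longleftrightarrow> (\<exists>c\<in>carrier G. \<forall>i\<in>A. t (\<pi> i) = c \<otimes> \<alpha> (t i))"
  proof -
    have "e i = c \<longleftrightarrow> t (\<pi> i) = inv c \<otimes> \<alpha> (t i)" if "i \<in> A" "c \<in> carrier G" for i c
      using that \<alpha> tA by (simp add: e_def inv_solve_right' inv_solve_left)
    then show ?thesis by (metis inv_closed inv_inv)
  qed
  also have "\<dots> \<longleftrightarrow> hol_relabels G A t \<alpha> \<pi>"
    using \<alpha> t by (rule hol_relabels_iff[symmetric])
  finally show ?thesis .
qed

lemma hol_stab_iff_permutes:
  assumes t: "inj_on t A" "t ` A \<subseteq> carrier G"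
    and g: "g \<in> carrier G" and \<alpha>: "\<alpha> \<in> carrier (aut_group G)"
  shows "(g, \<alpha>) \<in> hol_stab G (t ` A) \<longleftrightarrow>
    (\<exists>\<pi>. \<pi> permutes A \<and> (\<forall>i\<in>A. t (\<pi> i) = \<alpha> (inv g \<otimes> t i)))"
proof
  assume "(g, \<alpha>) \<in> hol_stab G (t ` A)"
  moreover have "inj_on (\<lambda>s. \<alpha> (inv g \<otimes> s)) (carrier G)"
  proof (rule inj_onI)
    fix u v assume uv: "u \<in> carrier G" "v \<in> carrier G" "\<alpha> (inv g \<otimes> u) = \<alpha> (inv g \<otimes> v)"
    then have "inv g \<otimes> u = inv g \<otimes> v"
      using inj_onD[OF bij_betw_imp_inj_on[OF aut_bij_betw[OF \<alpha>]]] g by simp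
    then show "u = v" using uv g by simp
  qed
  then have "inj_on (\<lambda>s. \<alpha> (inv g \<otimes> s)) (t ` A)" using t(2) by (rule inj_on_subset)
  ultimately show "\<exists>\<pi>. \<pi> permutes A \<and> (\<forall>i\<in>A. t (\<pi> i) = \<alpha> (inv g \<otimes> t i))"
    using permutes_of_image_invariant[OF t(1)] by (auto simp: hol_stab_def)
next
  assume "\<exists>\<pi>. \<pi> permutes A \<and> (\<forall>i\<in>A. t (\<pi> i) = \<alpha> (inv g \<otimes> t i))"
  then obtain \<pi> where \<pi>: "\<pi> permutes A" "\<forall>i\<in>A. t (\<pi> i) = \<alpha> (inv g \<otimes> t i)" by blast
  have "(\<lambda>s. \<alpha> (inv g \<otimes> s)) ` t ` A = t ` \<pi> ` A"
    using \<pi>(2) by (force simp: image_image)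
  then show "(g, \<alpha>) \<in> hol_stab G (t ` A)"
    using g \<alpha> permutes_image[OF \<pi>(1)] by (simp add: hol_stab_def)
qed

lemma one_in_hol_stab:
  assumes "S \<subseteq> carrier G"
  shows "(\<one>, \<one>\<^bsub>aut_group G\<^esub>) \<in> hol_stab G S"
proof -
  have "(\<lambda>s. \<one>\<^bsub>aut_group G\<^esub> (inv \<one> \<otimes> s)) ` S = (\<lambda>s. s) ` S"
    by (rule image_cong) (use assms in \<open>auto simp: aut_group_one\<close>)
  then show ?thesis
    using aut_group_one_closed by (simp add: hol_stab_def)
qed

lemma hol_rigid_imp_inj_on:
  assumes rigid: "hol_rigid G A t"
    and t: "t ` A \<subseteq> carrier G"
  shows "inj_on t A"
proof (rule inj_onI, rule ccontr)
  fix i j assume ij: "i \<in> A" "j \<in> A" "t i = t j" "i \<noteq> j"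
  have "t (transpose i j l) = \<one>\<^bsub>aut_group G\<^esub> (inv \<one> \<otimes> t l)" if "l \<in> A" for l
    using that ij t by (auto simp: aut_group_one transpose_def)
  then have "hol_relabels G A t \<one>\<^bsub>aut_group G\<^esub> (transpose i j)"
    unfolding hol_relabels_def by blast
  then have "transpose i j = id"
    using rigid aut_group_one_closed permutes_swap_id[OF ij(1,2)] unfolding hol_rigid_def by blast
  then have "transpose i j i = i" by simp
  with ij(4) show False by simp
qed

lemma hol_rigid_imp_hol_stab_trivial:
  assumes rigid: "hol_rigid G A t"
    and "A \<noteq> {}" and inj: "inj_on t A" and t: "t ` A \<subseteq> carrier G"
    and stab: "(g, \<alpha>) \<in> hol_stab G (t ` A)"
  shows "g = \<one> \<and> \<alpha> = \<one>\<^bsub>aut_group G\<^esub>"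
proof -
  have g: "g \<in> carrier G" and \<alpha>: "\<alpha> \<in> carrier (aut_group G)"
    using stab by (auto simp: hol_stab_def)
  obtain \<pi> where \<pi>: "\<pi> permutes A" "\<forall>i\<in>A. t (\<pi> i) = \<alpha> (inv g \<otimes> t i)"
    using hol_stab_iff_permutes[OF inj t g \<alpha>] stab by blast
  then have "hol_relabels G A t \<alpha> \<pi>"
    using g unfolding hol_relabels_def by blast
  then have \<alpha>1: "\<alpha> = \<one>\<^bsub>aut_group G\<^esub>" and "\<pi> = id"
    using rigid \<alpha> \<pi>(1) unfolding hol_rigid_def by blast+
  obtain i where i: "i \<in> A" using \<open>A \<noteq> {}\<close> by blast
  then have ti: "t i \<in> carrier G" using t by blast
  have "t i = \<alpha> (inv g \<otimes> t i)" using \<pi>(2) i \<open>\<pi> = id\<close> by simp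
  also have "\<dots> = inv g \<otimes> t i" using ti g by (simp add: \<alpha>1 aut_group_one)
  finally have "inv g = \<one>" using ti g by simp
  then have "g = \<one>" using g by (metis inv_inv inv_one)
  with \<alpha>1 show ?thesis by blast
qed

lemma hol_stab_trivial_imp_hol_rigid:
  assumes inj: "inj_on t A" and t: "t ` A \<subseteq> carrier G"
    and trivial: "hol_stab G (t ` A) = {(\<one>, \<one>\<^bsub>aut_group G\<^esub>)}"
  shows "hol_rigid G A t"
  unfolding hol_rigid_def
proof (intro ballI allI impI)
  fix \<alpha> \<pi> assume \<alpha>: "\<alpha> \<in> carrier (aut_group G)" and \<pi>: "\<pi> permutes A"
    and "hol_relabels G A t \<alpha> \<pi>"
  then obtain g where g: "g \<in> carrier G" and tg: "\<forall>i\<in>A. t (\<pi> i) = \<alpha> (inv g \<otimes> t i)"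
    by (auto simp: hol_relabels_def)
  then have "(g, \<alpha>) \<in> hol_stab G (t ` A)"
    using hol_stab_iff_permutes[OF inj t g \<alpha>] \<pi> by blast
  then have g1: "g = \<one>" and \<alpha>1: "\<alpha> = \<one>\<^bsub>aut_group G\<^esub>"
    using trivial by auto
  have "\<pi> i = i" for i
  proof (cases "i \<in> A")
    case True
    then have "t i \<in> carrier G" using t by blast
    then have "t (\<pi> i) = t i" using tg True by (simp add: g1 \<alpha>1 aut_group_one)
    then show ?thesis
      using inj True permutes_in_image[OF \<pi>] by (simp add: inj_on_eq_iff)
  next
    case False
    then show ?thesis using \<pi> by (simp add: permutes_not_in)
  qed
  then show "\<alpha> = \<one>\<^bsub>aut_group G\<^esub> \<and> \<pi> = id" using \<alpha>1 by auto
qed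

lemma hol_rigid_iff:
  assumes "A \<noteq> {}" and t: "t ` A \<subseteq> carrier G"
  shows "hol_rigid G A t \<longleftrightarrow> inj_on t A \<and> hol_stab G (t ` A) = {(\<one>, \<one>\<^bsub>aut_group G\<^esub>)}"
proof
  assume rigid: "hol_rigid G A t"
  then have inj: "inj_on t A" using t by (rule hol_rigid_imp_inj_on)
  have "hol_stab G (t ` A) \<subseteq> {(\<one>, \<one>\<^bsub>aut_group G\<^esub>)}"
    using hol_rigid_imp_hol_stab_trivial[OF rigid \<open>A \<noteq> {}\<close> inj t] by auto
  with inj one_in_hol_stab[OF t] show "inj_on t A \<and> hol_stab G (t ` A) = {(\<one>, \<one>\<^bsub>aut_group G\<^esub>)}"
    by blast
next
  assume "inj_on t A \<and> hol_stab G (t ` A) = {(\<one>, \<one>\<^bsub>aut_group G\<^esub>)}"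
  then show "hol_rigid G A t" using hol_stab_trivial_imp_hol_rigid[OF _ t] by blast
qed

lemma D_inter_conj_trivial_iff:
  assumes inj: "inj_on (inner G) (carrier G)" and "0 < k" and t: "t ` {0..<k} \<subseteq> carrier G"
  defines "x \<equiv> ((\<lambda>i\<in>{0..<k}. inner G (t i)), id)"
  shows "(\<forall>w\<in>D_set G k. (\<exists>d\<in>D_set G k. x \<otimes>\<^bsub>wreath G k\<^esub> w = d \<otimes>\<^bsub>wreath G k\<^esub> x)
            \<longrightarrow> w = \<one>\<^bsub>wreath G k\<^esub>)
    \<longleftrightarrow> hol_rigid G {0..<k} t"
    (is "?stab_trivial \<longleftrightarrow> ?rigid")
proof -
  have one: "((\<lambda>i\<in>{0..<k}. \<alpha>), \<pi>) = \<one>\<^bsub>wreath G k\<^esub> \<longleftrightarrow> \<alpha> = \<one>\<^bsub>aut_group G\<^esub> \<and> \<pi> = id"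
    for \<alpha> and \<pi> :: "nat \<Rightarrow> nat"
  proof -
    have "(\<lambda>i\<in>{0..<k}. \<alpha>) = (\<lambda>i\<in>{0..<k}. \<one>\<^bsub>aut_group G\<^esub>) \<longleftrightarrow> \<alpha> = \<one>\<^bsub>aut_group G\<^esub>"
      using \<open>0 < k\<close> by (auto simp: restrict_eq_restrict_iff)
    then show ?thesis by (simp add: wreath_one)
  qed
  have conj: "(\<exists>d\<in>D_set G k. x \<otimes>\<^bsub>wreath G k\<^esub> ((\<lambda>i\<in>{0..<k}. \<alpha>), \<pi>) = d \<otimes>\<^bsub>wreath G k\<^esub> x)
      \<longleftrightarrow> hol_relabels G {0..<k} t \<alpha> \<pi>"
    if "\<alpha> \<in> carrier (aut_group G)" "\<pi> permutes {0..<k}" for \<alpha> \<pi>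
    unfolding x_def inner_tuple_conj_iff[OF that(2)]
    using exists_aut_conj_iff_hol_relabels[OF inj _ t permutes_image[OF that(2), THEN equalityD1] that(1)]
      \<open>0 < k\<close> by simp
  show ?thesis
  proof
    assume ?stab_trivial
    show ?rigid
      unfolding hol_rigid_def
    proof (intro ballI allI impI)
      fix \<alpha> \<pi> assume \<alpha>: "\<alpha> \<in> carrier (aut_group G)" and \<pi>: "\<pi> permutes {0..<k}"
        and "hol_relabels G {0..<k} t \<alpha> \<pi>"
      moreover have "((\<lambda>i\<in>{0..<k}. \<alpha>), \<pi>) \<in> D_set G k"
        using \<alpha> \<pi> by (auto simp: D_set_def)
      ultimately have "((\<lambda>i\<in>{0..<k}. \<alpha>), \<pi>) = \<one>\<^bsub>wreath G k\<^esub>"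
        using \<open>?stab_trivial\<close> conj[OF \<alpha> \<pi>] by blast
      then show "\<alpha> = \<one>\<^bsub>aut_group G\<^esub> \<and> \<pi> = id" by (simp only: one)
    qed
  next
    assume ?rigid
    show ?stab_trivial
    proof (intro ballI impI)
      fix w assume "w \<in> D_set G k"
        and w_conj: "\<exists>d\<in>D_set G k. x \<otimes>\<^bsub>wreath G k\<^esub> w = d \<otimes>\<^bsub>wreath G k\<^esub> x"
      then obtain \<alpha> \<pi> where w: "w = ((\<lambda>i\<in>{0..<k}. \<alpha>), \<pi>)"
        and \<alpha>: "\<alpha> \<in> carrier (aut_group G)" and \<pi>: "\<pi> permutes {0..<k}"
        by (auto simp: D_set_def)
      then have "hol_relabels G {0..<k} t \<alpha> \<pi>" using conj w_conj by blast
      then have "\<alpha> = \<one>\<^bsub>aut_group G\<^esub> \<and> \<pi> = id" using \<open>?rigid\<close> \<alpha> \<pi> unfolding hol_rigid_def by blast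
      then show "w = \<one>\<^bsub>wreath G k\<^esub>" by (simp only: w one)
    qed
  qed
qed

end

theorem lemma2p13:
  fixes T :: "('a, 'b) monoid_scheme" and k :: nat and t :: "nat \<Rightarrow> 'a"
  assumes "simple_group T" and "finite (carrier T)" and "\<not> comm_group T"
    and "k \<ge> 2"
    and "\<forall>i\<in>{0..<k}. t i \<in> carrier T"
  shows "is_base T k {D_set T k,
           D_set T k #>\<^bsub>W_group T k\<^esub> ((\<lambda>i\<in>{0..<k}. inner T (t i)), id)}
         \<longleftrightarrow> inj_on t {0..<k} \<and>
             hol_stab T (t ` {0..<k}) = {(\<one>\<^bsub>T\<^esub>, \<one>\<^bsub>aut_group T\<^esub>)}"
proof -
  interpret simple_group T by (fact assms(1))
  have t: "t ` {0..<k} \<subseteq> carrier T" using assms(5) by blast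
  have "0 < k" using assms(4) by simp
  have "is_base T k {D_set T k, D_set T k #>\<^bsub>W_group T k\<^esub> ((\<lambda>i\<in>{0..<k}. inner T (t i)), id)}
    \<longleftrightarrow> hol_rigid T {0..<k} t"
    using is_base_pair_iff[OF inner_tuple_in_W_set] D_inter_conj_trivial_iff[OF inj_on_inner[OF assms(3)] \<open>0 < k\<close> t]
      assms(5) by simp
  also have "\<dots> \<longleftrightarrow> inj_on t {0..<k} \<and> hol_stab T (t ` {0..<k}) = {(\<one>\<^bsub>T\<^esub>, \<one>\<^bsub>aut_group T\<^esub>)}"
    using \<open>0 < k\<close> t by (intro hol_rigid_iff) auto
  finally show ?thesis .
qed

end
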